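(* For every integer $n\ge 3$, let $M_n$ be the $(n-2)\times(n-2)$ symmetric pentadiagonal matrix with entries \[ (M_n)_{ij}=\begin{cases} 2 & \text{if } i=j=1,\\ 3 & \text{if } i=j=2,\\ 4 & \text{if } i=j \text{ and } 3\le i\le n-2,\\ -1 & \text{if } |i-j|=1 \text{ or } |i-j|=2,\\ 0 & \text{if } |i-j|\ge 3. \end{cases} \] Then $\det M_n = F_{2n-3}$. *)

theory Defs
  imports "Jordan_Normal_Form.Determinant" "HOL-Number_Theory.Fib"
begin

definition M_entry :: "nat \<Rightarrow> nat \<Rightarrow> int" where
  "M_entry i j =
     (if i = j then (if i = 1 then 2 else if i = 2 then 3 else 4)
      else if nat \<bar>int i - int j\<bar> \<le> 2 then -1 else 0)"

text \<open>The (n-2)x(n-2) matrix M_n; Jordan_Normal_Form matrices are 0-indexed,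
  so position (i,j) holds the paper's entry (i+1, j+1).\<close>
definition M :: "nat \<Rightarrow> int mat" where
  "M n = mat (n - 2) (n - 2) (\<lambda>(i, j). M_entry (i + 1) (j + 1))"

end

theory Submission
  imports Defs
begin

text \<open>Consider band matrices shaped like M_n (diagonal 4, entries -1 at distance 1 and 2) but
  with an arbitrary symmetric top-left block [[x, y], [y, z]]. Pivoting on the corner entry x
  leaves a Schur complement of the same shape, one size smaller, with corner block
  [[z - y^2/x, y/x - 1], [y/x - 1, 4 - 1/x]]. For the corner block
  [[(a+b)/a, -b/a], [-b/a, (2a+b)/a]] this is the same block with (a, b) replaced by
  (a+b, a+2b), so starting from (a, b) = (F_1, F_2), where the block is [[2, -1], [-1, 3]],
  the pivots are the ratios F_{2j+3}/F_{2j+1} and their product telescopes to F_{2n-3}.\<close>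

definition schur_complement :: "'a::field mat \<Rightarrow> 'a mat" where
  "schur_complement A = mat (dim_row A - 1) (dim_col A - 1)
     (\<lambda>(i, j). A $$ (Suc i, Suc j) - A $$ (Suc i, 0) * A $$ (0, Suc j) / A $$ (0, 0))"

definition column_eliminator :: "'a::field mat \<Rightarrow> 'a mat" where
  "column_eliminator A = mat (dim_row A) (dim_row A)
     (\<lambda>(i, j). if i = j then 1 else if j = 0 then - A $$ (i, 0) / A $$ (0, 0) else 0)"

lemma det_column_eliminator: "det (column_eliminator A) = 1"
proof -
  let ?L = "column_eliminator A"
  have "det ?L = prod_list (diag_mat ?L)"
    by (rule det_lower_triangular[of "dim_row A"]) (auto simp: column_eliminator_def)
  also have "diag_mat ?L = replicate (dim_row A) 1"
    by (rule nth_equalityI) (auto simp: diag_mat_def column_eliminator_def)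
  finally show ?thesis by simp
qed

lemma column_eliminator_mult:
  assumes A: "A \<in> carrier_mat (Suc k) (Suc k)" and pivot: "A $$ (0, 0) \<noteq> 0"
  shows "column_eliminator A * A =
    four_block_mat (mat 1 1 (\<lambda>_. A $$ (0, 0))) (mat 1 k (\<lambda>(_, j). A $$ (0, Suc j)))
      (0\<^sub>m k 1) (schur_complement A)"
    (is "?L * A = ?U")
proof (rule eq_matI)
  fix i j assume "i < dim_row ?U" "j < dim_col ?U"
  then have i: "i < Suc k" and j: "j < Suc k" using A by (auto simp: schur_complement_def)
  have "(?L * A) $$ (i, j) = (\<Sum>l<Suc k. ?L $$ (i, l) * A $$ (l, j))"
    using i j A by (auto simp: column_eliminator_def scalar_prod_def atLeast0LessThan)
  also have "\<dots> = (\<Sum>l<Suc k. (if l = i then A $$ (i, j) else 0)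
      + (if l = 0 \<and> i \<noteq> 0 then - A $$ (i, 0) / A $$ (0, 0) * A $$ (0, j) else 0))"
    using i A by (intro sum.cong) (auto simp: column_eliminator_def)
  also have "\<dots> = A $$ (i, j) - (if i = 0 then 0 else A $$ (i, 0) * A $$ (0, j) / A $$ (0, 0))"
    using i by (simp add: sum.distrib)
  also have "\<dots> = ?U $$ (i, j)"
    using i j A pivot by (cases i; cases j) (auto simp: schur_complement_def)
  finally show "(?L * A) $$ (i, j) = ?U $$ (i, j)" .
qed (use A in \<open>auto simp: column_eliminator_def schur_complement_def\<close>)

lemma det_eq_pivot_mult_det_schur_complement:
  assumes A: "A \<in> carrier_mat (Suc k) (Suc k)" and pivot: "A $$ (0, 0) \<noteq> 0"
  shows "det A = A $$ (0, 0) * det (schur_complement A)"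
proof -
  have L: "column_eliminator A \<in> carrier_mat (Suc k) (Suc k)"
    using A by (simp add: column_eliminator_def)
  have "det A = det (column_eliminator A * A)"
    by (simp add: det_mult[OF L A] det_column_eliminator)
  also have "\<dots> = det (mat 1 1 (\<lambda>_. A $$ (0, 0))) * det (schur_complement A)"
    unfolding column_eliminator_mult[OF A pivot] using A
    by (intro det_four_block_mat_lower_left_zero_col) (auto simp: schur_complement_def)
  also have "det (mat 1 1 (\<lambda>_. A $$ (0, 0))) = A $$ (0, 0)"
    by (subst det_single) auto
  finally show ?thesis .
qed

definition pentadiag_entry :: "'a::field \<Rightarrow> 'a \<Rightarrow> 'a \<Rightarrow> nat \<Rightarrow> nat \<Rightarrow> 'a" where
  "pentadiag_entry x y z i j =
     (if i = 0 \<and> j = 0 then x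
      else if (i = 0 \<and> j = 1) \<or> (i = 1 \<and> j = 0) then y
      else if i = 1 \<and> j = 1 then z
      else if i = j then 4
      else if nat \<bar>int i - int j\<bar> \<le> 2 then -1 else 0)"

definition pentadiag_mat :: "nat \<Rightarrow> 'a::field \<Rightarrow> 'a \<Rightarrow> 'a \<Rightarrow> 'a mat" where
  "pentadiag_mat k x y z = mat k k (\<lambda>(i, j). pentadiag_entry x y z i j)"

lemma schur_complement_pentadiag_mat:
  assumes "x \<noteq> 0"
  shows "schur_complement (pentadiag_mat (Suc k) x y z)
    = pentadiag_mat k (z - y\<^sup>2 / x) (y / x - 1) (4 - 1 / x)"
proof (rule eq_matI)
  fix i j assume "i < dim_row (pentadiag_mat k (z - y\<^sup>2 / x) (y / x - 1) (4 - 1 / x))"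
    and "j < dim_col (pentadiag_mat k (z - y\<^sup>2 / x) (y / x - 1) (4 - 1 / x))"
  then have "i < k" "j < k" by (simp_all add: pentadiag_mat_def)
  then show "schur_complement (pentadiag_mat (Suc k) x y z) $$ (i, j)
      = pentadiag_mat k (z - y\<^sup>2 / x) (y / x - 1) (4 - 1 / x) $$ (i, j)"
    using assms
    by (cases "i = 0"; cases "i = 1"; cases "j = 0"; cases "j = 1")
      (auto simp: schur_complement_def pentadiag_mat_def pentadiag_entry_def
        power2_eq_square field_simps nat_le_iff)
qed (simp_all add: schur_complement_def pentadiag_mat_def)

lemma det_pentadiag_mat_Suc:
  assumes "x \<noteq> 0"
  shows "det (pentadiag_mat (Suc k) x y z)
    = x * det (pentadiag_mat k (z - y\<^sup>2 / x) (y / x - 1) (4 - 1 / x))"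
proof -
  have "pentadiag_mat (Suc k) x y z \<in> carrier_mat (Suc k) (Suc k)"
    and "pentadiag_mat (Suc k) x y z $$ (0, 0) = x"
    by (simp_all add: pentadiag_mat_def pentadiag_entry_def)
  then show ?thesis
    using det_eq_pivot_mult_det_schur_complement assms
    by (metis schur_complement_pentadiag_mat)
qed

lemma det_pentadiag_mat_ratio_Suc:
  assumes "a \<noteq> 0" and "a + b \<noteq> 0"
  shows "det (pentadiag_mat (Suc k) ((a + b) / a) (- b / a) ((2 * a + b) / a))
    = (a + b) / a * det (pentadiag_mat k (((a + b) + (a + 2 * b)) / (a + b))
        (- (a + 2 * b) / (a + b)) ((2 * (a + b) + (a + 2 * b)) / (a + b)))"
proof -
  have "((2 * a + b) / a) - (- b / a)\<^sup>2 / ((a + b) / a)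
      = ((2 * a + b) * (a + b) - b * b) / (a * (a + b))"
    using assms by (simp add: power2_eq_square diff_divide_distrib)
  also have "(2 * a + b) * (a + b) - b * b = a * ((a + b) + (a + 2 * b))"
    by (simp add: algebra_simps)
  finally have "((2 * a + b) / a) - (- b / a)\<^sup>2 / ((a + b) / a)
      = ((a + b) + (a + 2 * b)) / (a + b)"
    using assms by simp
  moreover have "(- b / a) / ((a + b) / a) - 1 = - (a + 2 * b) / (a + b)"
    using assms by (simp add: field_simps)
  moreover have "4 - 1 / ((a + b) / a) = (2 * (a + b) + (a + 2 * b)) / (a + b)"
    using assms by (simp add: field_simps)
  moreover have "(a + b) / a \<noteq> 0"
    using assms by simp
  ultimately show ?thesis
    by (simp add: det_pentadiag_mat_Suc)
qed

lemma det_pentadiag_mat_fib_ratio: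
  "det (pentadiag_mat k
      ((of_nat (fib (2 * j + 1)) + of_nat (fib (2 * j + 2))) / of_nat (fib (2 * j + 1)))
      (- of_nat (fib (2 * j + 2)) / of_nat (fib (2 * j + 1)))
      ((2 * of_nat (fib (2 * j + 1)) + of_nat (fib (2 * j + 2))) / of_nat (fib (2 * j + 1))))
    = (of_nat (fib (2 * (j + k) + 1)) / of_nat (fib (2 * j + 1)) :: 'a::field_char_0)"
proof (induction k arbitrary: j)
  case 0
  have "fib (2 * j + 1) \<noteq> 0"
    by (simp add: fib_neq_0_nat)
  then show ?case
    by (simp add: pentadiag_mat_def)
next
  case (Suc k)
  define a :: 'a where "a = of_nat (fib (2 * j + 1))"
  define b :: 'a where "b = of_nat (fib (2 * j + 2))"
  have a: "a \<noteq> 0" and ab: "a + b \<noteq> 0"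
    unfolding a_def b_def by (simp_all add: fib_neq_0_nat flip: of_nat_add)
  have fib_odd: "of_nat (fib (2 * Suc j + 1)) = a + b"
    and fib_even: "of_nat (fib (2 * Suc j + 2)) = a + 2 * b"
    by (simp_all add: a_def b_def numeral_eq_Suc)
  have IH: "det (pentadiag_mat k (((a + b) + (a + 2 * b)) / (a + b))
        (- (a + 2 * b) / (a + b)) ((2 * (a + b) + (a + 2 * b)) / (a + b)))
      = of_nat (fib (2 * (j + Suc k) + 1)) / (a + b)"
    using Suc.IH[of "Suc j"] unfolding fib_odd fib_even add_Suc_shift .
  have "det (pentadiag_mat (Suc k) ((a + b) / a) (- b / a) ((2 * a + b) / a))
      = (a + b) / a * (of_nat (fib (2 * (j + Suc k) + 1)) / (a + b))"
    unfolding det_pentadiag_mat_ratio_Suc[OF a ab] IH ..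
  also have "\<dots> = of_nat (fib (2 * (j + Suc k) + 1)) / a"
    using a ab by simp
  finally show ?case
    by (simp only: a_def b_def)
qed

theorem mainTheorem1:
  fixes n :: nat
  assumes "n \<ge> 3"
  shows "det (M n) = int (fib (2 * n - 3))"
proof -
  define m where "m = n - 2"
  have n: "n = m + 2" and fib_index: "2 * n - 3 = 2 * (0 + m) + 1"
    using assms by (simp_all add: m_def)
  have "map_mat rat_of_int (M n) = pentadiag_mat m 2 (-1) 3"
    unfolding M_def pentadiag_mat_def n
    by (rule eq_matI) (auto simp: M_entry_def pentadiag_entry_def)
  then have "rat_of_int (det (M n)) = det (pentadiag_mat m 2 (-1) 3)"
    by (metis of_int_hom.hom_det)
  also have "\<dots> = of_nat (fib (2 * n - 3))"
    unfolding fib_index using det_pentadiag_mat_fib_ratio[of m 0, where 'a = rat]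
    by (simp add: numeral_eq_Suc)
  finally show ?thesis
    by (metis of_int_eq_iff of_int_of_nat_eq)
qed

end
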